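(* Let $\alpha\ge 0$ and let $\mathcal L$ be a finite collection of pairwise parallel line segments in the plane $\mathbb{R}^2$ such that at least $\alpha\binom{|\mathcal L|}{3}$ of the 3-element subsets of $\mathcal L$ can be stabbed by a line (i.e., there is a line intersecting all three segments). Then there is a set of at least $\frac{\alpha}{3}|\mathcal L|$ segments in $\mathcal L$ that can be stabbed by a single line. *)

theory Defs
  imports "HOL-Analysis.Analysis"
begin

type_synonym point = "real ^ 2"

definition is_segment :: "point set \<Rightarrow> bool" where
  "is_segment S \<longleftrightarrow> (\<exists>a b. a \<noteq> b \<and> S = closed_segment a b)"

definition parallel_segments :: "point set \<Rightarrow> point set \<Rightarrow> bool" where
  "parallel_segments S T \<longleftrightarrow>
     (\<exists>a b c d. a \<noteq> b \<and> c \<noteq> d \<and> S = closed_segment a b \<and> T = closed_segment c d \<and>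
        (\<exists>k::real. d - c = k *\<^sub>R (b - a)))"

definition is_line :: "point set \<Rightarrow> bool" where
  "is_line l \<longleftrightarrow> (\<exists>p v. v \<noteq> 0 \<and> l = {p + t *\<^sub>R v | t. True})"

definition stabbable :: "point set set \<Rightarrow> bool" where
  "stabbable F \<longleftrightarrow> (\<exists>l. is_line l \<and> (\<forall>S\<in>F. S \<inter> l \<noteq> {}))"

end

theory Submission
  imports Defs
begin

text \<open>
  In coordinates along and across the common direction, every segment becomes a vertical
  segment \<open>{c S} \<times> [lo S, hi S]\<close>.  If a line stabs three such segments, then so does a line
  through the top endpoint of one of them and the bottom endpoint of another one lying further
  right.  Charge each stabbable triple to such a pair \<open>{s, t}\<close>: all segments of the triple are
  stabbed by the line determined by \<open>{s, t}\<close>, which stabs at most \<open>m\<close> segments, \<open>m\<close> being the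
  largest number of segments stabbed by one line.  Hence each pair receives at most \<open>m - 2\<close>
  triples, so \<open>\<alpha> (n choose 3) \<le> (n choose 2) (m - 2)\<close>, i.e. \<open>m \<ge> \<alpha> n / 3\<close>.
\<close>

section \<open>Counting triples through pairs\<close>

lemma card_3_supersets_of_pair_le:
  assumes "finite A" and "card P = 2"
  shows "card {T. card T = 3 \<and> P \<subseteq> T \<and> T \<subseteq> A} \<le> card A - 2"
proof (cases "P \<subseteq> A")
  case False
  then have "{T. card T = 3 \<and> P \<subseteq> T \<and> T \<subseteq> A} = {}" by blast
  then show ?thesis by (metis card.empty le0)
next
  case True
  have "finite P" using assms(2) by (simp add: card_ge_0_finite)
  have "{T. card T = 3 \<and> P \<subseteq> T \<and> T \<subseteq> A} \<subseteq> (\<lambda>u. insert u P) ` (A - P)"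
  proof
    fix T assume T: "T \<in> {T. card T = 3 \<and> P \<subseteq> T \<and> T \<subseteq> A}"
    then have "card (T - P) = 1"
      using \<open>finite P\<close> assms(2) by (simp add: card_Diff_subset)
    then obtain u where "T - P = {u}" by (auto simp: card_1_singleton_iff)
    then show "T \<in> (\<lambda>u. insert u P) ` (A - P)" using T by (intro image_eqI[of _ _ u]) auto
  qed
  then have "card {T. card T = 3 \<and> P \<subseteq> T \<and> T \<subseteq> A} \<le> card (A - P)"
    using assms(1) by (meson card_image_le card_mono finite_Diff finite_imageI le_trans)
  also have "\<dots> = card A - 2" using True \<open>finite P\<close> assms(2) by (simp add: card_Diff_subset)
  finally show ?thesis .
qed

lemma card_triples_le_by_pair_cover:
  fixes L :: "'a set" and H :: "'a \<Rightarrow> 'a \<Rightarrow> 'a set" and \<T> :: "'a set set"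
  assumes "finite L"
    and H_sym: "\<And>s t. H s t = H t s"
    and H_le: "\<And>s t. s \<in> L \<Longrightarrow> t \<in> L \<Longrightarrow> s \<noteq> t \<Longrightarrow> H s t \<subseteq> L \<and> card (H s t) \<le> m"
    and cover: "\<And>T. T \<in> \<T> \<Longrightarrow> T \<subseteq> L \<and> card T = 3 \<and> (\<exists>s\<in>T. \<exists>t\<in>T. s \<noteq> t \<and> T \<subseteq> H s t)"
  shows "card \<T> \<le> (card L choose 2) * (m - 2)"
proof -
  define G where "G P = the_elem {H s t |s t. P = {s, t}}" for P
  have G: "G {s, t} = H s t" for s t
  proof -
    have "H s' t' = H s t" if "{s, t} = {s', t'}" for s' t'
      using that H_sym by (metis doubleton_eq_iff)
    then have "{H s' t' |s' t'. {s, t} = {s', t'}} = {H s t}" by blast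
    then show ?thesis by (simp add: G_def)
  qed
  define Pairs where "Pairs = {P. P \<subseteq> L \<and> card P = 2}"
  define through where "through P = {T. card T = 3 \<and> P \<subseteq> T \<and> T \<subseteq> G P}" for P
  have G_le: "G P \<subseteq> L \<and> card (G P) \<le> m" if P: "P \<in> Pairs" for P
  proof -
    obtain s t where "P = {s, t}" "s \<noteq> t" "s \<in> L" "t \<in> L"
      using P unfolding Pairs_def card_2_iff by blast
    then show ?thesis using H_le[of s t] by (simp add: G)
  qed
  have "finite Pairs" using \<open>finite L\<close> by (simp add: Pairs_def)
  have "\<T> \<subseteq> (\<Union>P\<in>Pairs. through P)"
  proof
    fix T assume "T \<in> \<T>"
    then obtain s t where "T \<subseteq> L" "card T = 3" "s \<in> T" "t \<in> T" "s \<noteq> t" "T \<subseteq> H s t"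
      using cover[OF \<open>T \<in> \<T>\<close>] by blast
    then have "{s, t} \<in> Pairs" "T \<in> through {s, t}"
      by (auto simp: Pairs_def through_def G)
    then show "T \<in> (\<Union>P\<in>Pairs. through P)" by blast
  qed
  moreover have "finite (through P)" if "P \<in> Pairs" for P
  proof (rule finite_subset)
    show "through P \<subseteq> Pow (G P)" by (auto simp: through_def)
    show "finite (Pow (G P))" using G_le[OF that] \<open>finite L\<close> by (auto intro: finite_subset)
  qed
  ultimately have "card \<T> \<le> card (\<Union>P\<in>Pairs. through P)"
    using \<open>finite Pairs\<close> by (intro card_mono) auto
  also have "\<dots> \<le> (\<Sum>P\<in>Pairs. card (through P))"
    using \<open>finite Pairs\<close> by (rule card_UN_le)
  also have "\<dots> \<le> (\<Sum>P\<in>Pairs. m - 2)"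
  proof (rule sum_mono)
    fix P assume P: "P \<in> Pairs"
    have "card (through P) \<le> card (G P) - 2" unfolding through_def
      using G_le[OF P] \<open>finite L\<close> P
      by (intro card_3_supersets_of_pair_le) (auto simp: Pairs_def intro: finite_subset)
    then show "card (through P) \<le> m - 2" using G_le[OF P] by linarith
  qed
  also have "\<dots> = (card L choose 2) * (m - 2)"
    using n_subsets[OF \<open>finite L\<close>, of 2] by (simp add: Pairs_def)
  finally show ?thesis .
qed

lemma fraction_bound_from_triple_count:
  fixes \<alpha> :: real and n m :: nat
  assumes "0 \<le> \<alpha>" and "\<alpha> \<le> 1" and "0 < n \<Longrightarrow> 0 < m"
    and count: "\<alpha> * real (n choose 3) \<le> real ((n choose 2) * (m - 2))"
  shows "\<alpha> / 3 * real n \<le> real m"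
proof (cases "n < 3")
  case True
  have "\<alpha> * real n \<le> 1 * 2" using True assms(1,2) by (intro mult_mono) auto
  then show ?thesis using assms(3) by (cases "n = 0") auto
next
  case False
  have "3 * (n choose 3) = (n - 2) * (n choose 2)"
    using binomial_absorption[of 2 n] binomial_absorb_comp[of n 2]
    by (simp add: numeral_3_eq_3 numeral_2_eq_2)
  then have "real (3 * (n choose 3)) = real ((n - 2) * (n choose 2))" by (simp only:)
  then have choose_3: "3 * real (n choose 3) = (real n - 2) * real (n choose 2)"
    using False by (simp add: of_nat_diff)
  have "0 < real (n choose 2)" "0 < real (n choose 3)" using False by simp_all
  show ?thesis
  proof (cases "2 \<le> m")
    case True
    have "\<alpha> * (3 * real (n choose 3)) \<le> 3 * (real (n choose 2) * (real m - 2))"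
      using count True by (simp add: of_nat_diff)
    then have "(\<alpha> * (real n - 2)) * real (n choose 2) \<le> (3 * (real m - 2)) * real (n choose 2)"
      unfolding choose_3 by (simp only: ac_simps)
    then have "\<alpha> * (real n - 2) \<le> 3 * (real m - 2)"
      using \<open>0 < real (n choose 2)\<close> by (rule mult_right_le_imp_le)
    then show ?thesis using assms(2) by (simp add: algebra_simps)
  next
    case False
    then have "\<alpha> * real (n choose 3) \<le> 0" using count by simp
    then have "\<alpha> = 0" using assms(1) \<open>0 < real (n choose 3)\<close> by (simp add: mult_le_0_iff)
    then show ?thesis by simp
  qed
qed

section \<open>Stabbing vertical segments\<close>

text \<open>
  An element \<open>S\<close> stands for the vertical segment \<open>{c S} \<times> [lo S, hi S]\<close>; a line meeting all
  of them is either vertical or the graph of \<open>x \<mapsto> \<alpha> x + \<beta>\<close>.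
\<close>

definition vsegs_stabbable :: "('a \<Rightarrow> real) \<Rightarrow> ('a \<Rightarrow> real) \<Rightarrow> ('a \<Rightarrow> real) \<Rightarrow> 'a set \<Rightarrow> bool" where
  "vsegs_stabbable c lo hi F \<longleftrightarrow>
     (\<exists>x0. \<forall>S\<in>F. c S = x0 \<and> lo S \<le> hi S) \<or> (\<exists>\<alpha> \<beta>. \<forall>S\<in>F. \<alpha> * c S + \<beta> \<in> {lo S..hi S})"

definition line_through :: "real \<Rightarrow> real \<Rightarrow> real \<Rightarrow> real \<Rightarrow> real \<Rightarrow> real" where
  "line_through x1 y1 x2 y2 x = y1 + (y2 - y1) / (x2 - x1) * (x - x1)"

lemma line_through_left [simp]: "line_through x1 y1 x2 y2 x1 = y1"
  by (simp add: line_through_def)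

lemma line_through_right [simp]: "x1 \<noteq> x2 \<Longrightarrow> line_through x1 y1 x2 y2 x2 = y2"
  by (simp add: line_through_def)

lemma line_through_affine:
  "line_through x1 y1 x2 y2 = (\<lambda>x. (y2 - y1) / (x2 - x1) * x + (y1 - (y2 - y1) / (x2 - x1) * x1))"
  by (rule ext) (simp add: line_through_def right_diff_distrib)

lemma affine_order_right:
  fixes f g :: "real \<Rightarrow> real"
  assumes "f = (\<lambda>x. a * x + b)" and "g = (\<lambda>x. a' * x + b')"
    and "x < y" and "y \<le> z" and "g x \<le> f x" and "f y \<le> g y"
  shows "f z \<le> g z"
proof -
  have "(a - a') * (y - x) \<le> 0" using assms by (simp add: algebra_simps)
  then have "a - a' \<le> 0" using \<open>x < y\<close> by (simp add: mult_le_0_iff)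
  then have "(a - a') * (z - y) \<le> 0" using \<open>y \<le> z\<close> by (simp add: mult_nonpos_nonneg)
  then show ?thesis using assms by (simp add: algebra_simps)
qed

lemma affine_order_left:
  fixes f g :: "real \<Rightarrow> real"
  assumes "f = (\<lambda>x. a * x + b)" and "g = (\<lambda>x. a' * x + b')"
    and "x \<le> y" and "y < z" and "g y \<le> f y" and "f z \<le> g z"
  shows "g x \<le> f x"
  using affine_order_right[of "\<lambda>x. g (- x)" "- a'" b' "\<lambda>x. f (- x)" "- a" b "- z" "- y" "- x"] assms
  by simp

text \<open>
  If the line from the top of segment 1 to the bottom of segment 3 passes above segment 2,
  rotate it about the bottom of segment 3 down to the top of segment 2; if it passes below,
  rotate it about the top of segment 1 up to the bottom of segment 2.  Comparing slopes with
  the given stabbing line shows that the third segment stays stabbed.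
\<close>

lemma top_bottom_line_stabs_third:
  fixes x1 x2 x3 a1 a2 a3 b1 b2 b3 \<alpha> \<beta> :: real
  assumes "x1 \<le> x2" and "x2 \<le> x3" and "x1 < x3"
    and s1: "\<alpha> * x1 + \<beta> \<in> {a1..b1}" and s2: "\<alpha> * x2 + \<beta> \<in> {a2..b2}" and s3: "\<alpha> * x3 + \<beta> \<in> {a3..b3}"
  shows "line_through x1 b1 x3 a3 x2 \<in> {a2..b2}
    \<or> x2 < x3 \<and> line_through x2 b2 x3 a3 x1 \<in> {a1..b1}
    \<or> x1 < x2 \<and> line_through x1 b1 x2 a2 x3 \<in> {a3..b3}"
proof -
  define l where "l = (\<lambda>x. \<alpha> * x + \<beta>)"
  define w where "w = line_through x1 b1 x3 a3 x2"
  consider "w \<in> {a2..b2}" | "b2 < w" | "w < a2" by force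
  then show ?thesis
  proof cases
    case 1
    then show ?thesis by (simp add: w_def)
  next
    case 2
    have "x2 < x3"
    proof (rule ccontr)
      assume "\<not> x2 < x3"
      then have "x2 = x3" using assms(2) by simp
      then show False using 2 s2 s3 \<open>x1 < x3\<close> by (simp add: w_def)
    qed
    have "l x1 \<le> line_through x2 b2 x3 a3 x1"
      by (rule affine_order_left[OF line_through_affine l_def assms(1) \<open>x2 < x3\<close>])
        (use s2 s3 \<open>x2 < x3\<close> in \<open>auto simp: l_def\<close>)
    moreover have "line_through x2 b2 x3 a3 x1 \<le> line_through x1 b1 x3 a3 x1"
      by (rule affine_order_left[OF line_through_affine line_through_affine assms(1) \<open>x2 < x3\<close>])
        (use 2 \<open>x2 < x3\<close> \<open>x1 < x3\<close> in \<open>auto simp: w_def\<close>)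
    ultimately show ?thesis using s1 \<open>x2 < x3\<close> by (simp add: l_def)
  next
    case 3
    have "x1 < x2"
    proof (rule ccontr)
      assume "\<not> x1 < x2"
      then have "x1 = x2" using assms(1) by simp
      then show False using 3 s1 s2 by (simp add: w_def)
    qed
    have "line_through x1 b1 x2 a2 x3 \<le> l x3"
      by (rule affine_order_right[OF line_through_affine l_def \<open>x1 < x2\<close> assms(2)])
        (use s1 s2 \<open>x1 < x2\<close> in \<open>auto simp: l_def\<close>)
    moreover have "line_through x1 b1 x3 a3 x3 \<le> line_through x1 b1 x2 a2 x3"
      by (rule affine_order_right[OF line_through_affine line_through_affine \<open>x1 < x2\<close> assms(2)])
        (use 3 \<open>x1 < x2\<close> in \<open>auto simp: w_def\<close>)
    ultimately show ?thesis using s3 \<open>x1 < x2\<close> \<open>x1 < x3\<close> by (simp add: l_def)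
  qed
qed

lemma sorted_enumeration_3:
  fixes f :: "'a \<Rightarrow> 'b::linorder"
  obtains p q r where "{p, q, r} = {x, y, z}" and "f p \<le> f q" and "f q \<le> f r"
  by (metis insert_commute nle_le)

definition top_bottom_hits ::
    "('a \<Rightarrow> real) \<Rightarrow> ('a \<Rightarrow> real) \<Rightarrow> ('a \<Rightarrow> real) \<Rightarrow> 'a set \<Rightarrow> 'a \<Rightarrow> 'a \<Rightarrow> 'a set" where
  "top_bottom_hits c lo hi L s t = {S \<in> L. line_through (c s) (hi s) (c t) (lo t) (c S) \<in> {lo S..hi S}}"

definition pair_hits ::
    "('a \<Rightarrow> real) \<Rightarrow> ('a \<Rightarrow> real) \<Rightarrow> ('a \<Rightarrow> real) \<Rightarrow> 'a set \<Rightarrow> 'a \<Rightarrow> 'a \<Rightarrow> 'a set" where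
  "pair_hits c lo hi L s t =
     (if c s = c t then {S \<in> L. c S = c s \<and> lo S \<le> hi S}
      else if c s < c t then top_bottom_hits c lo hi L s t
      else top_bottom_hits c lo hi L t s)"

lemma pair_hits_commute: "pair_hits c lo hi L s t = pair_hits c lo hi L t s"
  by (simp add: pair_hits_def)

lemma pair_hits_subset: "pair_hits c lo hi L s t \<subseteq> L"
  by (auto simp: pair_hits_def top_bottom_hits_def)

lemma vsegs_stabbable_top_bottom_hits: "vsegs_stabbable c lo hi (top_bottom_hits c lo hi L s t)"
  unfolding vsegs_stabbable_def top_bottom_hits_def line_through_affine by blast

lemma vsegs_stabbable_pair_hits: "vsegs_stabbable c lo hi (pair_hits c lo hi L s t)"
  by (auto simp: pair_hits_def vsegs_stabbable_top_bottom_hits) (auto simp: vsegs_stabbable_def)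

lemma vsegs_stabbable_nonempty: "vsegs_stabbable c lo hi F \<Longrightarrow> S \<in> F \<Longrightarrow> lo S \<le> hi S"
  unfolding vsegs_stabbable_def by fastforce

lemma ends_in_top_bottom_hits:
  assumes "c s \<noteq> c t" and "s \<in> L" and "t \<in> L" and "lo s \<le> hi s" and "lo t \<le> hi t"
  shows "s \<in> top_bottom_hits c lo hi L s t" and "t \<in> top_bottom_hits c lo hi L s t"
  using assms by (simp_all add: top_bottom_hits_def)

lemma stabbable_triple_in_pair_hits:
  assumes "T \<subseteq> L" and "card T = 3" and stab: "vsegs_stabbable c lo hi T"
  shows "\<exists>s\<in>T. \<exists>t\<in>T. s \<noteq> t \<and> T \<subseteq> pair_hits c lo hi L s t"
proof -
  obtain x y z where T: "T = {x, y, z}" "x \<noteq> y"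
    using assms(2) unfolding card_3_iff by blast
  have nonempty: "lo S \<le> hi S" if "S \<in> T" for S
    using vsegs_stabbable_nonempty[OF stab that] .
  obtain p q r where pqr: "{p, q, r} = T" "c p \<le> c q" "c q \<le> c r"
    using sorted_enumeration_3[where f = c and x = x and y = y and z = z] T(1) by metis
  show ?thesis
  proof (cases "c p = c r")
    case True
    then have "c S = c p" if "S \<in> T" for S
      using that pqr(2,3) unfolding pqr(1)[symmetric] by auto
    then have "T \<subseteq> pair_hits c lo hi L x y"
      using assms(1) nonempty T(1) by (auto simp: pair_hits_def)
    then show ?thesis using T by blast
  next
    case False
    then have "c p < c r" using pqr by simp
    obtain \<alpha> \<beta> where line: "\<forall>S\<in>T. \<alpha> * c S + \<beta> \<in> {lo S..hi S}"
      using stab False pqr(1) unfolding vsegs_stabbable_def by auto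
    have suff: ?thesis if "{s, t, u} = T" and "c s < c t" and "u \<in> top_bottom_hits c lo hi L s t"
      for s t u
    proof -
      have "T \<subseteq> top_bottom_hits c lo hi L s t"
        using that assms(1) nonempty ends_in_top_bottom_hits[of c s t L lo hi] by auto
      moreover have "pair_hits c lo hi L s t = top_bottom_hits c lo hi L s t"
        using that(2) by (simp add: pair_hits_def)
      ultimately show ?thesis using that(1,2) by force
    qed
    have "\<alpha> * c p + \<beta> \<in> {lo p..hi p}" "\<alpha> * c q + \<beta> \<in> {lo q..hi q}" "\<alpha> * c r + \<beta> \<in> {lo r..hi r}"
      using line pqr(1) by auto
    from top_bottom_line_stabs_third[OF pqr(2,3) \<open>c p < c r\<close> this]
    consider "q \<in> top_bottom_hits c lo hi L p r"
      | "c q < c r" "p \<in> top_bottom_hits c lo hi L q r"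
      | "c p < c q" "r \<in> top_bottom_hits c lo hi L p q"
      using pqr(1) assms(1) unfolding top_bottom_hits_def by blast
    then show ?thesis
    proof cases
      case 1
      then show ?thesis using suff[of p r q] pqr(1) \<open>c p < c r\<close> by (simp add: insert_commute)
    next
      case 2
      then show ?thesis using suff[of q r p] pqr(1) by (simp add: insert_commute)
    next
      case 3
      then show ?thesis using suff[of p q r] pqr(1) by simp
    qed
  qed
qed

theorem large_vsegs_stabbable_subset:
  fixes L :: "'a set" and c lo hi :: "'a \<Rightarrow> real" and \<alpha> :: real
  assumes "finite L" and "\<forall>S\<in>L. lo S \<le> hi S" and "0 \<le> \<alpha>" and "\<alpha> \<le> 1"
    and "\<alpha> * real (card L choose 3) \<le> real (card {T. T \<subseteq> L \<and> card T = 3 \<and> vsegs_stabbable c lo hi T})"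
  shows "\<exists>F\<subseteq>L. vsegs_stabbable c lo hi F \<and> \<alpha> / 3 * real (card L) \<le> real (card F)"
proof -
  have "\<exists>F. (F \<subseteq> L \<and> vsegs_stabbable c lo hi F) \<and>
      (\<forall>G. G \<subseteq> L \<and> vsegs_stabbable c lo hi G \<longrightarrow> card G \<le> card F)"
  proof (rule Lattices_Big.ex_has_greatest_nat)
    show "{} \<subseteq> L \<and> vsegs_stabbable c lo hi {}" by (simp add: vsegs_stabbable_def)
    show "\<forall>G. G \<subseteq> L \<and> vsegs_stabbable c lo hi G \<longrightarrow> card G < Suc (card L)"
      using card_mono[OF \<open>finite L\<close>] by (simp add: le_imp_less_Suc)
  qed
  then obtain F where F: "F \<subseteq> L" "vsegs_stabbable c lo hi F"
    and max: "\<And>G. G \<subseteq> L \<Longrightarrow> vsegs_stabbable c lo hi G \<Longrightarrow> card G \<le> card F"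
    by blast
  have "card {T. T \<subseteq> L \<and> card T = 3 \<and> vsegs_stabbable c lo hi T} \<le> (card L choose 2) * (card F - 2)"
    using \<open>finite L\<close> pair_hits_commute
  proof (rule card_triples_le_by_pair_cover)
    show "pair_hits c lo hi L s t \<subseteq> L \<and> card (pair_hits c lo hi L s t) \<le> card F" for s t
      using max[OF pair_hits_subset vsegs_stabbable_pair_hits] pair_hits_subset by simp
    show "T \<subseteq> L \<and> card T = 3 \<and> (\<exists>s\<in>T. \<exists>t\<in>T. s \<noteq> t \<and> T \<subseteq> pair_hits c lo hi L s t)"
      if "T \<in> {T. T \<subseteq> L \<and> card T = 3 \<and> vsegs_stabbable c lo hi T}" for T
      using that stabbable_triple_in_pair_hits[of T L] by simp
  qed
  then have count: "\<alpha> * real (card L choose 3) \<le> real ((card L choose 2) * (card F - 2))"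
    using assms(5) of_nat_mono order_trans by blast
  have pos: "0 < card F" if "0 < card L"
  proof -
    have "L \<noteq> {}" using that by auto
    then obtain S where "S \<in> L" by blast
    then have "vsegs_stabbable c lo hi {S}" using assms(2) by (simp add: vsegs_stabbable_def)
    then have "card {S} \<le> card F" using \<open>S \<in> L\<close> max by blast
    then show ?thesis by simp
  qed
  have "\<alpha> / 3 * real (card L) \<le> real (card F)"
    by (rule fraction_bound_from_triple_count[OF assms(3,4) pos count])
  then show ?thesis using F by blast
qed

section \<open>Parallel segments as vertical segments\<close>

definition perp :: "point \<Rightarrow> point" where
  "perp v = vector [v$2, - v$1]"

lemma inner_perp_self [simp]: "perp v \<bullet> perp v = v \<bullet> v"
  and inner_perp_left [simp]: "perp v \<bullet> v = 0"
  and inner_perp_right [simp]: "v \<bullet> perp v = 0"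
  by (simp_all add: perp_def inner_vec_def sum_2 algebra_simps)

lemma perp_decomposition:
  assumes "v \<bullet> v = 1"
  shows "x = (perp v \<bullet> x) *\<^sub>R perp v + (v \<bullet> x) *\<^sub>R v"
proof -
  have "v$1 * v$1 + v$2 * v$2 = 1" using assms by (simp add: inner_vec_def sum_2)
  then show ?thesis
    by (simp add: vec_eq_iff forall_2 perp_def inner_vec_def sum_2) algebra
qed

lemma point_eq_iff_coords:
  assumes "v \<bullet> v = 1"
  shows "x = y \<longleftrightarrow> perp v \<bullet> x = perp v \<bullet> y \<and> v \<bullet> x = v \<bullet> y"
  by (metis perp_decomposition[OF assms])

lemma coords_of_point [simp]:
  assumes "v \<bullet> v = 1"
  shows "perp v \<bullet> (a *\<^sub>R perp v + b *\<^sub>R v) = a" "v \<bullet> (a *\<^sub>R perp v + b *\<^sub>R v) = b"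
  using assms by (simp_all add: inner_add_right)

lemma mem_closed_segment_along_iff:
  assumes v: "v \<bullet> v = 1" and k: "0 < k"
  shows "x \<in> closed_segment a (a + k *\<^sub>R v) \<longleftrightarrow>
    perp v \<bullet> x = perp v \<bullet> a \<and> v \<bullet> a \<le> v \<bullet> x \<and> v \<bullet> x \<le> v \<bullet> a + k"
proof
  assume "x \<in> closed_segment a (a + k *\<^sub>R v)"
  then obtain u where u: "0 \<le> u" "u \<le> 1" "x = a + (u * k) *\<^sub>R v"
    by (auto simp: in_segment algebra_simps)
  have "u * k \<le> k" using u k by (simp add: mult_left_le_one_le)
  then show "perp v \<bullet> x = perp v \<bullet> a \<and> v \<bullet> a \<le> v \<bullet> x \<and> v \<bullet> x \<le> v \<bullet> a + k"
    using u k v by (simp add: inner_add_right)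
next
  assume x: "perp v \<bullet> x = perp v \<bullet> a \<and> v \<bullet> a \<le> v \<bullet> x \<and> v \<bullet> x \<le> v \<bullet> a + k"
  define u where "u = (v \<bullet> x - v \<bullet> a) / k"
  have "x = (1 - u) *\<^sub>R a + u *\<^sub>R (a + k *\<^sub>R v)"
    using x k v by (subst point_eq_iff_coords[OF v]) (simp add: u_def inner_add_right field_simps)
  moreover have "0 \<le> u" "u \<le> 1" using x k by (simp_all add: u_def)
  ultimately show "x \<in> closed_segment a (a + k *\<^sub>R v)" by (auto simp: in_segment)
qed

lemma stabbableI:
  assumes "u \<noteq> 0" and "\<And>S. S \<in> F \<Longrightarrow> \<exists>t. p + t *\<^sub>R u \<in> S"
  shows "stabbable F"
proof -
  have "\<forall>S\<in>F. S \<inter> {p + t *\<^sub>R u |t. True} \<noteq> {}" using assms(2) by blast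
  then show ?thesis unfolding stabbable_def is_line_def using assms(1) by blast
qed

lemma stabbable_imp_vsegs_stabbable:
  assumes rep: "\<And>T x. T \<in> F \<Longrightarrow> x \<in> T \<longleftrightarrow> perp v \<bullet> x = c T \<and> v \<bullet> x \<in> {lo T..hi T}"
    and "stabbable F"
  shows "vsegs_stabbable c lo hi F"
proof -
  obtain p u where "\<forall>S\<in>F. S \<inter> {p + t *\<^sub>R u |t. True} \<noteq> {}"
    using \<open>stabbable F\<close> unfolding stabbable_def is_line_def by blast
  then have "\<forall>S\<in>F. \<exists>t. p + t *\<^sub>R u \<in> S" by blast
  then obtain t where t: "\<And>S. S \<in> F \<Longrightarrow> p + t S *\<^sub>R u \<in> S" by metis
  have c: "c S = perp v \<bullet> p + t S * (perp v \<bullet> u)"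
    and lohi: "v \<bullet> p + t S * (v \<bullet> u) \<in> {lo S..hi S}" if "S \<in> F" for S
    using rep[OF that, of "p + t S *\<^sub>R u"] t[OF that] by (simp_all add: inner_add_right)
  show ?thesis
  proof (cases "perp v \<bullet> u = 0")
    case True
    then have "\<forall>S\<in>F. c S = perp v \<bullet> p \<and> lo S \<le> hi S" using c lohi True by fastforce
    then show ?thesis unfolding vsegs_stabbable_def by blast
  next
    case False
    define \<alpha> where "\<alpha> = (v \<bullet> u) / (perp v \<bullet> u)"
    have "\<alpha> * c S + (v \<bullet> p - \<alpha> * (perp v \<bullet> p)) \<in> {lo S..hi S}" if "S \<in> F" for S
      using lohi[OF that] False by (simp add: c[OF that] \<alpha>_def algebra_simps)
    then show ?thesis unfolding vsegs_stabbable_def by blast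
  qed
qed

lemma vsegs_stabbable_imp_stabbable:
  assumes v: "v \<bullet> v = 1"
    and rep: "\<And>T x. T \<in> F \<Longrightarrow> x \<in> T \<longleftrightarrow> perp v \<bullet> x = c T \<and> v \<bullet> x \<in> {lo T..hi T}"
    and "vsegs_stabbable c lo hi F"
  shows "stabbable F"
  using \<open>vsegs_stabbable c lo hi F\<close> unfolding vsegs_stabbable_def
proof (elim disjE exE)
  fix x0 assume vertical: "\<forall>S\<in>F. c S = x0 \<and> lo S \<le> hi S"
  show "stabbable F"
  proof (rule stabbableI)
    show "v \<noteq> 0" using v by auto
    show "\<exists>t. x0 *\<^sub>R perp v + t *\<^sub>R v \<in> S" if "S \<in> F" for S
    proof
      show "x0 *\<^sub>R perp v + lo S *\<^sub>R v \<in> S"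
        using rep[OF that] vertical that v by simp
    qed
  qed
next
  fix \<alpha> \<beta> assume graph: "\<forall>S\<in>F. \<alpha> * c S + \<beta> \<in> {lo S..hi S}"
  show "stabbable F"
  proof (rule stabbableI)
    have "perp v \<bullet> (perp v + \<alpha> *\<^sub>R v) = 1" using v by (simp add: inner_add_right)
    then show "perp v + \<alpha> *\<^sub>R v \<noteq> 0" by auto
    show "\<exists>t. \<beta> *\<^sub>R v + t *\<^sub>R (perp v + \<alpha> *\<^sub>R v) \<in> S" if "S \<in> F" for S
    proof
      have "c S *\<^sub>R perp v + (\<alpha> * c S + \<beta>) *\<^sub>R v \<in> S"
        using rep[OF that] graph that v by simp
      then show "\<beta> *\<^sub>R v + c S *\<^sub>R (perp v + \<alpha> *\<^sub>R v) \<in> S"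
        by (simp add: algebra_simps)
    qed
  qed
qed

lemma closed_segment_as_ray_segment:
  assumes "d - c = r *\<^sub>R v" and "r \<noteq> 0"
  shows "\<exists>a k. 0 < k \<and> closed_segment c d = closed_segment a (a + k *\<^sub>R v)"
proof (cases "0 < r")
  case True
  then show ?thesis using assms(1) by (intro exI[of _ c] exI[of _ r]) (simp add: algebra_simps)
next
  case False
  then have "0 < - r" "c = d + (- r) *\<^sub>R v" using assms by (simp_all add: algebra_simps)
  then show ?thesis by (metis closed_segment_commute)
qed

lemma parallel_segments_common_direction:
  assumes par: "\<forall>S\<in>L. \<forall>T\<in>L. parallel_segments S T"
  obtains v where "v \<bullet> v = 1" and "\<forall>T\<in>L. \<exists>a k. 0 < k \<and> T = closed_segment a (a + k *\<^sub>R v)"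
proof (cases "L = {}")
  case True
  show ?thesis
  proof (rule that)
    show "(axis 1 1 :: point) \<bullet> axis 1 1 = 1" by (simp add: inner_axis_axis)
  qed (use True in simp)
next
  case False
  then obtain S0 where S0: "S0 \<in> L" by blast
  have "parallel_segments S0 S0" using par S0 by blast
  then obtain a0 b0 where ab0: "a0 \<noteq> b0" "S0 = closed_segment a0 b0"
    unfolding parallel_segments_def by blast
  define v where "v = sgn (b0 - a0)"
  have "v \<bullet> v = 1" using ab0 by (simp add: v_def dot_square_norm norm_sgn)
  moreover have "\<exists>a k. 0 < k \<and> T = closed_segment a (a + k *\<^sub>R v)" if T: "T \<in> L" for T
  proof -
    have "parallel_segments S0 T" using par S0 T by blast
    then obtain a b c d k where abcd: "S0 = closed_segment a b" "c \<noteq> d" "T = closed_segment c d"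
      "d - c = k *\<^sub>R (b - a)"
      unfolding parallel_segments_def by blast
    have "{a, b} = {a0, b0}" using abcd(1) ab0(2) by simp
    moreover have "b0 - a0 = norm (b0 - a0) *\<^sub>R v"
      using ab0(1) by (simp add: v_def sgn_div_norm)
    ultimately obtain s where "b - a = s *\<^sub>R v"
      by (metis (no_types, opaque_lifting) doubleton_eq_iff minus_diff_eq scaleR_minus_left)
    then have "d - c = (k * s) *\<^sub>R v" using abcd(4) by simp
    moreover have "k * s \<noteq> 0" using abcd(2) calculation by auto
    ultimately show ?thesis using closed_segment_as_ray_segment abcd(3) by metis
  qed
  ultimately show ?thesis using that by blast
qed

lemma parallel_segments_as_vsegs:
  assumes "\<forall>S\<in>L. \<forall>T\<in>L. parallel_segments S T"
  obtains c lo hi :: "point set \<Rightarrow> real"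
  where "\<forall>S\<in>L. lo S \<le> hi S" and "\<And>F. F \<subseteq> L \<Longrightarrow> stabbable F \<longleftrightarrow> vsegs_stabbable c lo hi F"
proof -
  obtain v where v: "v \<bullet> v = 1" and "\<forall>T\<in>L. \<exists>a k. 0 < k \<and> T = closed_segment a (a + k *\<^sub>R v)"
    using parallel_segments_common_direction[OF assms] by blast
  then obtain a k where ak: "\<And>T. T \<in> L \<Longrightarrow> 0 < k T \<and> T = closed_segment (a T) (a T + k T *\<^sub>R v)"
    by metis
  define c where "c T = perp v \<bullet> a T" for T
  define lo where "lo T = v \<bullet> a T" for T
  define hi where "hi T = v \<bullet> a T + k T" for T
  have rep: "x \<in> T \<longleftrightarrow> perp v \<bullet> x = c T \<and> v \<bullet> x \<in> {lo T..hi T}" if "T \<in> L" for T x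
    using mem_closed_segment_along_iff[OF v, of "k T" x "a T"] ak[OF that]
    by (simp add: c_def lo_def hi_def)
  have "\<forall>S\<in>L. lo S \<le> hi S" using ak by (simp add: lo_def hi_def less_imp_le)
  moreover have "stabbable F \<longleftrightarrow> vsegs_stabbable c lo hi F" if F: "F \<subseteq> L" for F
  proof -
    have repF: "x \<in> T \<longleftrightarrow> perp v \<bullet> x = c T \<and> v \<bullet> x \<in> {lo T..hi T}" if "T \<in> F" for T x
      using F that by (intro rep) blast
    show ?thesis
      using stabbable_imp_vsegs_stabbable[OF repF] vsegs_stabbable_imp_stabbable[OF v repF] by blast
  qed
  ultimately show thesis using that by blast
qed

theorem lemma4:
  fixes L :: "point set set" and \<alpha> :: real
  assumes "\<alpha> \<ge> 0" and "\<alpha> \<le> 1"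
    and "finite L"
    and "\<forall>S\<in>L. is_segment S"
    and "\<forall>S\<in>L. \<forall>T\<in>L. parallel_segments S T"
    and "real (card {T. T \<subseteq> L \<and> card T = 3 \<and> stabbable T}) \<ge> \<alpha> * real (card L choose 3)"
  shows "\<exists>F\<subseteq>L. stabbable F \<and> real (card F) \<ge> \<alpha> / 3 * real (card L)"
proof -
  obtain c lo hi where lohi: "\<forall>S\<in>L. lo S \<le> hi S"
    and stab_iff: "\<And>F. F \<subseteq> L \<Longrightarrow> stabbable F \<longleftrightarrow> vsegs_stabbable c lo hi F"
    using parallel_segments_as_vsegs[OF assms(5)] by metis
  have "{T. T \<subseteq> L \<and> card T = 3 \<and> stabbable T} = {T. T \<subseteq> L \<and> card T = 3 \<and> vsegs_stabbable c lo hi T}"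
    using stab_iff by (intro Collect_cong) blast
  then have "\<alpha> * real (card L choose 3) \<le> real (card {T. T \<subseteq> L \<and> card T = 3 \<and> vsegs_stabbable c lo hi T})"
    using assms(6) by simp
  then obtain F where F: "F \<subseteq> L" "vsegs_stabbable c lo hi F" "\<alpha> / 3 * real (card L) \<le> real (card F)"
    using large_vsegs_stabbable_subset[OF assms(3) lohi assms(1,2)] by blast
  then show ?thesis using stab_iff[OF F(1)] by blast
qed

end
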